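(* Let $G$ be a disk graph with parameter $r$ on a finite point set in the plane. For every two crossing edges of $G$, the four endpoints are pairwise at Euclidean distance at most $2r$; moreover, one of the four endpoints is within distance $r$ of each of the other three.
   Context: The disk graph on a point set $P$ with parameter $r$ is the geometric graph with vertex set $P$ having a straight-line edge between $p,q\in P$ iff $|pq|\le r$. Two line segments cross if they have a common point that is interior to both. *)

theory Defs
  imports "HOL-Analysis.Analysis"
begin

definition disk_graph_edge :: "(real^2) set \<Rightarrow> real \<Rightarrow> real^2 \<Rightarrow> real^2 \<Rightarrow> bool" where
  "disk_graph_edge P r p q \<longleftrightarrow> p \<in> P \<and> q \<in> P \<and> p \<noteq> q \<and> dist p q \<le> r"

definition segments_cross :: "real^2 \<Rightarrow> real^2 \<Rightarrow> real^2 \<Rightarrow> real^2 \<Rightarrow> bool" where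
  "segments_cross a b c d \<longleftrightarrow> open_segment a b \<inter> open_segment c d \<noteq> {}"

end

theory Submission
  imports Defs
begin

text \<open>Let x be a common point of the two edges. Every endpoint lies within r of x, which gives
the bound 2r. The endpoint z nearest to x is within r of the other endpoint of its own edge, and
for an endpoint w of the other edge, whose other end is w', the triangle inequality through x gives
|zw| \<le> |zx| + |xw| \<le> |w'x| + |xw| = |ww'| \<le> r.\<close>

lemma dist_eq_add_dist_closed_segment:
  fixes x :: "'a::euclidean_space"
  assumes "x \<in> closed_segment a b"
  shows "dist a b = dist a x + dist x b"
  using assms between between_mem_segment by blast

lemma dist_endpoints_le_segment_length_if_nearer:
  fixes x :: "'a::euclidean_space"
  assumes "x \<in> closed_segment c d" and "dist z x \<le> dist c x" and "dist z x \<le> dist d x"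
  shows "dist z c \<le> dist c d \<and> dist z d \<le> dist c d"
proof -
  have "dist c d = dist c x + dist x d"
    using assms(1) by (rule dist_eq_add_dist_closed_segment)
  moreover have "dist z c \<le> dist z x + dist x c" and "dist z d \<le> dist z x + dist x d"
    by (rule dist_triangle)+
  ultimately show ?thesis
    using assms(2,3) by (simp add: dist_commute)
qed

lemma crossing_segments_endpoints_dist_le:
  fixes x :: "'a::euclidean_space"
  assumes "x \<in> closed_segment p q" and "x \<in> closed_segment s t"
  shows "\<forall>a\<in>{p, q, s, t}. \<forall>b\<in>{p, q, s, t}. dist a b \<le> dist p q + dist s t"
proof (intro ballI)
  fix a b assume "a \<in> {p, q, s, t}" and "b \<in> {p, q, s, t}"
  have near: "dist w x \<le> dist p q" if "w \<in> {p, q}" for w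
    using that dist_in_closed_segment[OF assms(1)] by (auto simp: dist_commute)
  have near': "dist w x \<le> dist s t" if "w \<in> {s, t}" for w
    using that dist_in_closed_segment[OF assms(2)] by (auto simp: dist_commute)
  have via_x: "dist a b \<le> dist a x + dist b x"
    using dist_triangle[of a b x] by (simp add: dist_commute)
  consider "a \<in> {p, q}" "b \<in> {p, q}" | "a \<in> {s, t}" "b \<in> {s, t}"
    | "a \<in> {p, q}" "b \<in> {s, t}" | "a \<in> {s, t}" "b \<in> {p, q}"
    using \<open>a \<in> {p, q, s, t}\<close> \<open>b \<in> {p, q, s, t}\<close> by blast
  then show "dist a b \<le> dist p q + dist s t"
  proof cases
    case 1
    then have "dist a b \<le> dist p q"
      by (auto simp: dist_commute)
    then show ?thesis
      by (simp add: add_increasing2)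
  next
    case 2
    then have "dist a b \<le> dist s t"
      by (auto simp: dist_commute)
    then show ?thesis
      by (simp add: add_increasing)
  next
    case 3
    then show ?thesis
      using via_x near near' by fastforce
  next
    case 4
    then show ?thesis
      using via_x near near' by fastforce
  qed
qed

lemma crossing_segments_nearest_endpoint_near_all:
  fixes x :: "'a::euclidean_space"
  assumes "x \<in> closed_segment p q" and "x \<in> closed_segment s t" and "z \<in> {p, q}"
    and "dist z x \<le> dist s x" and "dist z x \<le> dist t x"
  shows "\<forall>w\<in>{p, q, s, t}. dist z w \<le> max (dist p q) (dist s t)"
proof -
  have "dist z w \<le> dist p q" if "w \<in> {p, q}" for w
    using assms(3) that by (auto simp: dist_commute)
  moreover have "dist z s \<le> dist s t \<and> dist z t \<le> dist s t"
    using assms(2,4,5) by (rule dist_endpoints_le_segment_length_if_nearer)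
  ultimately show ?thesis
    by fastforce
qed

lemma crossing_segments_endpoint_near_all:
  fixes x :: "'a::euclidean_space"
  assumes "x \<in> closed_segment p q" and "x \<in> closed_segment s t"
  shows "\<exists>z\<in>{p, q, s, t}. \<forall>w\<in>{p, q, s, t}. dist z w \<le> max (dist p q) (dist s t)"
proof -
  define z where "z = arg_min_on (\<lambda>w. dist w x) {p, q, s, t}"
  have "z \<in> {p, q, s, t}" and z_nearest: "\<And>w. w \<in> {p, q, s, t} \<Longrightarrow> dist z x \<le> dist w x"
    using arg_min_if_finite[of "{p, q, s, t}" "\<lambda>w. dist w x"] unfolding z_def
    by (auto simp: not_less)
  then consider "z \<in> {p, q}" | "z \<in> {s, t}"
    by blast
  then show ?thesis
  proof cases
    case 1
    then show ?thesis
      using crossing_segments_nearest_endpoint_near_all[OF assms 1] z_nearest \<open>z \<in> {p, q, s, t}\<close>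
      by blast
  next
    case 2
    have "\<forall>w\<in>{s, t, p, q}. dist z w \<le> max (dist s t) (dist p q)"
      using crossing_segments_nearest_endpoint_near_all[OF assms(2,1) 2] z_nearest by blast
    then show ?thesis
      using \<open>z \<in> {p, q, s, t}\<close> by (auto simp: max.commute)
  qed
qed

theorem corollary2:
  fixes P :: "(real^2) set" and r :: real and p q s t :: "real^2"
  assumes "finite P"
    and "disk_graph_edge P r p q" and "disk_graph_edge P r s t"
    and "{p, q} \<noteq> {s, t}"
    and "segments_cross p q s t"
  shows "(\<forall>x\<in>{p, q, s, t}. \<forall>y\<in>{p, q, s, t}. dist x y \<le> 2 * r)
       \<and> (\<exists>z\<in>{p, q, s, t}. \<forall>w\<in>{p, q, s, t}. dist z w \<le> r)"
proof -
  obtain x where x: "x \<in> closed_segment p q" "x \<in> closed_segment s t"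
    using assms(5) open_closed_segment unfolding segments_cross_def by blast
  have "dist p q \<le> r" and "dist s t \<le> r"
    using assms(2,3) unfolding disk_graph_edge_def by auto
  then have "dist p q + dist s t \<le> 2 * r" and "max (dist p q) (dist s t) \<le> r"
    by simp_all
  then show ?thesis
    using crossing_segments_endpoints_dist_le[OF x] crossing_segments_endpoint_near_all[OF x]
    by (meson order_trans)
qed

end
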